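(* Let $S$ be an idempotent $\omega$-continuous semiring, $\mathcal X$ a finite set of variables, and $\vec x=\vec p=\vec f\oplus\vec a$ a system of polynomial equations, where $\vec a\in S^{\mathcal X}$ is the vector of constant parts and $\vec f=(f_x)_{x\in\mathcal X}$ consists of polynomials in which every monomial contains at least one variable. Let $\mu\vec p$ be the least solution of $\vec x=\vec p$. Let $M^{(0)}=\widehat{\vec f}$, $M^{(n+1)}=\mathrm{eval}_{M^{(n)}}(M^{(n)})$, and for $\vec b\in S^{\mathcal X}$ let $M^{(n)}_{\vec b}=\mathrm{eval}_{\vec b}(M^{(n)})$. Then: (1) for all $n\in\mathbb N$, $M^{(n)}_{\vec a}=N^{(2^n)}$; (2) if $\vec a\le\vec b\le\mu\vec p$, then $\sup_{n\in\mathbb N}M^{(n)}_{\vec b}=\mu\vec p$.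
   Context: Semiring notions: a semiring $(S,\oplus,\odot,0,1)$; natural order $a\le a\oplus b$ (componentwise on vectors); $\omega$-continuous: naturally ordered, chains have suprema, countable sums $\bigoplus_i a_i:=\sup_i(a_0\oplus\dots\oplus a_i)$ commute with $\odot$ on both sides and are invariant under partitioning; idempotent: $a\oplus a=a$. Monomials are words $a_1x_{i_1}\cdots a_lx_{i_l}a_{l+1}$ ($a_j\in S$, $x_{i_j}\in\mathcal X$), polynomials finite sums of monomials, interpreted as functions $S^{\mathcal X}\to S$; functions and vectors of functions form semirings with pointwise operations. $\mathrm{eval}_{\vec v}(g)$ is the composition $g\circ\vec v$ (or the value $g(\vec v)$ if $\vec v$ is a vector of constants), applied componentwise to vectors. A solution is $\vec v\in S^{\mathcal X}$ with $\vec v=\mathrm{eval}_{\vec v}(\vec p)$. Linear completion: a substitution $\{x\mapsto g\}$ applied to a polynomial $h$ yields the set $h\{x\mapsto g\}$ of polynomials obtained by replacing exactly one occurrence of $x$ in $h$ by $g$. Linear polynomial substitutions for $x$ are $\{x\mapsto x\}$ or $\{x\mapsto g\}$ with $g\in f_x\sigma_y$ for some variable $y$ and some linear polynomial substitution $\sigma_y$ for $y$ (mutual induction). $\widehat{\vec f}$ has components $\widehat{f_x}=\bigoplus_{\sigma_x}x\sigma_x$ where $x\{x\mapsto g\}=g$, summing over all linear polynomial substitutions for $x$. Newton iteration: for a polynomial $q$, a variable $y$ and $\vec v\in S^{\mathcal X}$, the differential $D_y q|_{\vec v}$ is defined by: $D_y(\bigoplus_i m_i)|_{\vec v}=\bigoplus_i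 D_y m_i|_{\vec v}$; $D_y(g\odot h)|_{\vec v}=(D_y g|_{\vec v}\odot\mathrm{eval}_{\vec v}(h))\oplus(\mathrm{eval}_{\vec v}(g)\odot D_y h|_{\vec v})$; $D_y q|_{\vec v}=0$ if $q\in S$ or $q$ is a variable other than $y$; $D_y y|_{\vec v}=y$. Further $Dq|_{\vec v}=\bigoplus_{y\in\mathcal X}D_yq|_{\vec v}$, componentwise on vectors, and $D\vec p|_{\vec v}^{*}=\bigoplus_{i\in\mathbb N}(D\vec p|_{\vec v})^i$ with $(D\vec p|_{\vec v})^0=\mathrm{id}$ and $(D\vec p|_{\vec v})^{i+1}=\mathrm{eval}_{(D\vec p|_{\vec v})^i}(D\vec p|_{\vec v})$. The Newton sequence is $N^{(0)}=\mathrm{eval}_{\vec 0}(\vec p)$, $N^{(n+1)}=\mathrm{eval}_{N^{(n)}}\big(D\vec p|_{N^{(n)}}^{*}\big)$. *)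

theory Defs
  imports Main
begin

definition nle :: "'a::plus \<Rightarrow> 'a \<Rightarrow> bool" where
  "nle a b \<longleftrightarrow> (\<exists>c. b = a + c)"

definition is_nlub :: "'a::plus \<Rightarrow> 'a set \<Rightarrow> bool" where
  "is_nlub s A \<longleftrightarrow> (\<forall>a\<in>A. nle a s) \<and> (\<forall>t. (\<forall>a\<in>A. nle a t) \<longrightarrow> nle s t)"

definition csum :: "(nat \<Rightarrow> 'a::comm_monoid_add) \<Rightarrow> 'a" where
  "csum f = (THE s. is_nlub s (range (\<lambda>n. sum f {..n})))"

definition idem_omega_semiring :: "'a::{semiring_0,monoid_mult} itself \<Rightarrow> bool" where
  "idem_omega_semiring (_::'a itself) \<longleftrightarrow>
     (\<forall>a b::'a. nle a b \<longrightarrow> nle b a \<longrightarrow> a = b)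
   \<and> (\<forall>f::nat \<Rightarrow> 'a. (\<forall>i. nle (f i) (f (Suc i))) \<longrightarrow> (\<exists>s. is_nlub s (range f)))
   \<and> (\<forall>(c::'a) f. csum (\<lambda>i. c * f i) = c * csum f)
   \<and> (\<forall>(c::'a) f. csum (\<lambda>i. f i * c) = csum f * c)
   \<and> (\<forall>(f::nat \<Rightarrow> 'a) (I::nat \<Rightarrow> nat set).
         (\<forall>j k. j \<noteq> k \<longrightarrow> I j \<inter> I k = {}) \<longrightarrow> (\<Union>j. I j) = UNIV \<longrightarrow>
         csum f = csum (\<lambda>j. csum (\<lambda>n. if n \<in> I j then f n else 0)))
   \<and> (\<forall>a::'a. a + a = a)"

definition ssum :: "('b \<Rightarrow> 'a::comm_monoid_add) \<Rightarrow> 'b set \<Rightarrow> 'a" where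
  "ssum g A = (THE s. is_nlub s {sum g F | F. finite F \<and> F \<subseteq> A})"

definition vle :: "('x \<Rightarrow> 'a::plus) \<Rightarrow> ('x \<Rightarrow> 'a) \<Rightarrow> bool" where
  "vle u v \<longleftrightarrow> (\<forall>x. nle (u x) (v x))"

definition vis_lub :: "('x \<Rightarrow> 'a::plus) \<Rightarrow> ('x \<Rightarrow> 'a) set \<Rightarrow> bool" where
  "vis_lub s A \<longleftrightarrow> (\<forall>u\<in>A. vle u s) \<and> (\<forall>t. (\<forall>u\<in>A. vle u t) \<longrightarrow> vle s t)"

datatype ('a,'x) letter = C 'a | V 'x
type_synonym ('a,'x) mono = "('a,'x) letter list"
type_synonym ('a,'x) poly = "('a,'x) mono list"

fun leval :: "('x \<Rightarrow> 'a) \<Rightarrow> ('a,'x) letter \<Rightarrow> 'a" where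
  "leval v (C a) = a"
| "leval v (V x) = v x"

definition meval :: "('x \<Rightarrow> 'a::monoid_mult) \<Rightarrow> ('a,'x) mono \<Rightarrow> 'a" where
  "meval v m = prod_list (map (leval v) m)"

definition peval :: "('x \<Rightarrow> 'a::{semiring_0,monoid_mult}) \<Rightarrow> ('a,'x) poly \<Rightarrow> 'a" where
  "peval v p = sum_list (map (meval v) p)"

definition sys :: "('x \<Rightarrow> ('a,'x) poly) \<Rightarrow> ('x \<Rightarrow> 'a) \<Rightarrow> 'x \<Rightarrow> ('a,'x) poly" where
  "sys f a x = f x @ [[C (a x)]]"

definition is_solution :: "('x \<Rightarrow> ('a::{semiring_0,monoid_mult},'x) poly) \<Rightarrow> ('x \<Rightarrow> 'a) \<Rightarrow> bool" where
  "is_solution p v \<longleftrightarrow> (\<forall>x. v x = peval v (p x))"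

definition least_solution :: "('x \<Rightarrow> ('a::{semiring_0,monoid_mult},'x) poly) \<Rightarrow> ('x \<Rightarrow> 'a) \<Rightarrow> bool" where
  "least_solution p v \<longleftrightarrow> is_solution p v \<and> (\<forall>w. is_solution p w \<longrightarrow> vle v w)"

text \<open>h{x \<mapsto> g}: replace exactly one occurrence of x in h by g (distributing over the
  monomials of g).\<close>
definition subst :: "('a,'x) poly \<Rightarrow> 'x \<Rightarrow> ('a,'x) poly \<Rightarrow> ('a,'x) poly set" where
  "subst h x g = {take k h @ map (\<lambda>gm. take j (h!k) @ gm @ drop (Suc j) (h!k)) g @ drop (Suc k) h
                   | k j. k < length h \<and> j < length (h!k) \<and> h!k!j = V x}"

inductive lps :: "('x \<Rightarrow> ('a,'x) poly) \<Rightarrow> 'x \<Rightarrow> ('a,'x) poly \<Rightarrow> bool" for f where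
  lps_id: "lps f x [[V x]]"
| lps_step: "lps f y s \<Longrightarrow> g \<in> subst (f x) y s \<Longrightarrow> lps f x g"

definition linc :: "('x \<Rightarrow> ('a::{semiring_0,monoid_mult},'x) poly) \<Rightarrow> 'x \<Rightarrow> ('x \<Rightarrow> 'a) \<Rightarrow> 'a" where
  "linc f x = (\<lambda>v. ssum (\<lambda>g. peval v g) {g. lps f x g})"

text \<open>eval_G(F) for vectors of functions: composition.\<close>
definition vcomp :: "('x \<Rightarrow> ('y \<Rightarrow> 'a) \<Rightarrow> 'a) \<Rightarrow> ('y \<Rightarrow> ('z \<Rightarrow> 'a) \<Rightarrow> 'a) \<Rightarrow> 'x \<Rightarrow> ('z \<Rightarrow> 'a) \<Rightarrow> 'a" where
  "vcomp F G = (\<lambda>x v. F x (\<lambda>y. G y v))"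

fun Mseq :: "('x \<Rightarrow> ('a::{semiring_0,monoid_mult},'x) poly) \<Rightarrow> nat \<Rightarrow> 'x \<Rightarrow> ('x \<Rightarrow> 'a) \<Rightarrow> 'a" where
  "Mseq f 0 = linc f"
| "Mseq f (Suc n) = vcomp (Mseq f n) (Mseq f n)"

fun dletter :: "'x \<Rightarrow> ('a,'x) letter \<Rightarrow> ('x \<Rightarrow> 'a::zero) \<Rightarrow> 'a" where
  "dletter y (C a) u = 0"
| "dletter y (V z) u = (if z = y then u y else 0)"

fun dmono :: "'x \<Rightarrow> ('x \<Rightarrow> 'a::{semiring_0,monoid_mult}) \<Rightarrow> ('a,'x) mono \<Rightarrow> ('x \<Rightarrow> 'a) \<Rightarrow> 'a" where
  "dmono y v [] u = 0"
| "dmono y v (l # w) u = dletter y l u * meval v w + leval v l * dmono y v w u"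

definition dpoly :: "'x \<Rightarrow> ('x \<Rightarrow> 'a::{semiring_0,monoid_mult}) \<Rightarrow> ('a,'x) poly \<Rightarrow> ('x \<Rightarrow> 'a) \<Rightarrow> 'a" where
  "dpoly y v p u = sum_list (map (\<lambda>m. dmono y v m u) p)"

definition Dp :: "('x::finite \<Rightarrow> ('a::{semiring_0,monoid_mult},'x) poly) \<Rightarrow> ('x \<Rightarrow> 'a) \<Rightarrow> 'x \<Rightarrow> ('x \<Rightarrow> 'a) \<Rightarrow> 'a" where
  "Dp p v x u = (\<Sum>y\<in>UNIV. dpoly y v (p x) u)"

fun Dpow :: "('x::finite \<Rightarrow> ('a::{semiring_0,monoid_mult},'x) poly) \<Rightarrow> ('x \<Rightarrow> 'a) \<Rightarrow> nat \<Rightarrow> 'x \<Rightarrow> ('x \<Rightarrow> 'a) \<Rightarrow> 'a" where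
  "Dpow p v 0 = (\<lambda>x u. u x)"
| "Dpow p v (Suc i) = vcomp (Dp p v) (Dpow p v i)"

definition Dstar :: "('x::finite \<Rightarrow> ('a::{semiring_0,monoid_mult},'x) poly) \<Rightarrow> ('x \<Rightarrow> 'a) \<Rightarrow> 'x \<Rightarrow> ('x \<Rightarrow> 'a) \<Rightarrow> 'a" where
  "Dstar p v x u = csum (\<lambda>i. Dpow p v i x u)"

fun newton :: "('x::finite \<Rightarrow> ('a::{semiring_0,monoid_mult},'x) poly) \<Rightarrow> nat \<Rightarrow> 'x \<Rightarrow> 'a" where
  "newton p 0 = (\<lambda>x. peval (\<lambda>_. 0) (p x))"
| "newton p (Suc n) = (\<lambda>x. Dstar p (newton p n) x (newton p n))"

end

theory Submission
  imports Defs "HOL-Library.Countable_Set"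
begin

text \<open>Everything is driven by the Newton step v \<mapsto> Dp|_v^*(v). Because every monomial of f
  contains a variable, idempotence turns Euler's identity into Dp|_v(v) = f(v); with it, the
  linear polynomial substitutions for x evaluated at v correspond exactly to the paths through
  iterated differentials, so the linear completion evaluated at v is the Newton step applied to v.
  Hence M^(n) evaluated at b is the 2^n-fold Newton step from b, which is part (1) because
  N^(0) = a. For part (2), the Newton step maps every solution below itself, so the iterates from
  b stay below the least solution, while they dominate the Kleene iterates, whose supremum is a
  solution by \<omega>-continuity and thus lies above the least solution.\<close>

section \<open>Natural order and suprema\<close>

lemma nle_refl [simp]: "nle (a::'a::monoid_add) a"
  unfolding nle_def by (metis add_0_right)

lemma nle_trans [trans]: "nle (a::'a::semigroup_add) b \<Longrightarrow> nle b c \<Longrightarrow> nle a c"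
  unfolding nle_def by (metis add.assoc)

lemma nle_zero [simp]: "nle 0 (a::'a::monoid_add)"
  unfolding nle_def by (metis add_0_left)

lemma nle_add1 [simp]: "nle a (a + b)"
  unfolding nle_def by blast

lemma nle_add2 [simp]: "nle (b::'a::ab_semigroup_add) (a + b)"
  unfolding nle_def by (metis add.commute)

lemma nle_add_mono: "nle (a::'a::ab_semigroup_add) b \<Longrightarrow> nle c d \<Longrightarrow> nle (a + c) (b + d)"
  unfolding nle_def by (metis add.assoc add.left_commute)

lemma nle_mult_left: "nle (a::'a::semiring) b \<Longrightarrow> nle (c * a) (c * b)"
  unfolding nle_def by (metis distrib_left)

lemma nle_mult_right: "nle (a::'a::semiring) b \<Longrightarrow> nle (a * c) (b * c)"
  unfolding nle_def by (metis distrib_right)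

lemma nle_mult_mono: "nle (a::'a::semiring) b \<Longrightarrow> nle c d \<Longrightarrow> nle (a * c) (b * d)"
  by (meson nle_mult_left nle_mult_right nle_trans)

lemma nle_sum_mono:
  "(\<And>i. i \<in> F \<Longrightarrow> nle (g i) (h i)) \<Longrightarrow> nle (sum g F) (sum (h::_ \<Rightarrow> 'a::comm_monoid_add) F)"
  by (induction F rule: infinite_finite_induct) (auto intro: nle_add_mono)

lemma nle_sum_elem: "finite F \<Longrightarrow> i \<in> F \<Longrightarrow> nle (g i) (sum (g::_ \<Rightarrow> 'a::comm_monoid_add) F)"
  by (simp add: sum.remove)

lemma nle_sum_list_map_mono:
  "(\<And>x. x \<in> set xs \<Longrightarrow> nle (g x) (h x)) \<Longrightarrow>
   nle (sum_list (map g xs)) (sum_list (map (h::_ \<Rightarrow> 'a::comm_monoid_add) xs))"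
  by (induction xs) (auto intro: nle_add_mono)

lemma nle_sum_list_map_elem:
  "x \<in> set xs \<Longrightarrow> nle (g x) (sum_list (map (g::_ \<Rightarrow> 'a::comm_monoid_add) xs))"
  by (simp add: sum_list_map_remove1)

lemma vle_refl [simp]: "vle (v::_ \<Rightarrow> 'a::monoid_add) v"
  by (simp add: vle_def)

lemma vle_trans [trans]: "vle (u::_ \<Rightarrow> 'a::semigroup_add) v \<Longrightarrow> vle v w \<Longrightarrow> vle u w"
  unfolding vle_def by (blast intro: nle_trans)

lemma lub_ge: "is_nlub s A \<Longrightarrow> a \<in> A \<Longrightarrow> nle a s"
  unfolding is_nlub_def by blast

lemma lub_le: "is_nlub s A \<Longrightarrow> (\<And>a. a \<in> A \<Longrightarrow> nle a t) \<Longrightarrow> nle s t"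
  unfolding is_nlub_def by blast

lemma lub_shift:
  assumes "\<And>k. nle (c k) (c (Suc k))" and "is_nlub s (range (\<lambda>k. c (Suc k)))"
  shows "is_nlub (s::'a::semigroup_add) (range c)"
  unfolding is_nlub_def
proof (intro conjI ballI allI impI)
  fix y assume "y \<in> range c"
  then obtain k where "y = c k" by blast
  have "nle (c k) (c (Suc k))" by (rule assms(1))
  also have "nle (c (Suc k)) s" using assms(2) by (rule lub_ge) simp
  finally show "nle y s" using \<open>y = c k\<close> by simp
next
  fix t assume "\<forall>y\<in>range c. nle y t"
  then show "nle s t" using assms(2) by (auto intro: lub_le)
qed

locale idem_omega =
  fixes T :: "'a::{semiring_0,monoid_mult} itself"
  assumes idem_omega_semiring: "idem_omega_semiring T"
begin

lemma nle_antisym: "nle (a::'a) b \<Longrightarrow> nle b a \<Longrightarrow> a = b"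
  using idem_omega_semiring unfolding idem_omega_semiring_def by (elim conjE) blast

lemma chain_has_lub: "(\<And>i. nle (f i) (f (Suc i))) \<Longrightarrow> \<exists>s::'a. is_nlub s (range f)"
  using idem_omega_semiring unfolding idem_omega_semiring_def by (elim conjE) blast

lemma csum_mult_left: "csum (\<lambda>i. c * f i) = (c::'a) * csum f"
  using idem_omega_semiring unfolding idem_omega_semiring_def by (elim conjE) blast

lemma csum_mult_right: "csum (\<lambda>i. f i * c) = csum f * (c::'a)"
  using idem_omega_semiring unfolding idem_omega_semiring_def by (elim conjE) blast

lemma add_idem [simp]: "(a::'a) + a = a"
  using idem_omega_semiring unfolding idem_omega_semiring_def by (elim conjE) blast

lemma nle_iff_add_eq: "nle (a::'a) b \<longleftrightarrow> a + b = b"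
proof
  assume "nle a b"
  then obtain c where "b = a + c" unfolding nle_def by blast
  then show "a + b = b" by (simp add: add.assoc[symmetric])
qed (auto simp: nle_def intro: exI[of _ b])

lemma nle_add_iff: "nle ((a::'a) + b) c \<longleftrightarrow> nle a c \<and> nle b c"
proof
  assume "nle (a + b) c"
  then show "nle a c \<and> nle b c" by (meson nle_add1 nle_add2 nle_trans)
next
  assume "nle a c \<and> nle b c"
  then have "a + c = c" "b + c = c" by (simp_all add: nle_iff_add_eq)
  then have "(a + b) + c = c" by (metis add.assoc)
  then show "nle (a + b) c" by (simp add: nle_iff_add_eq)
qed

lemma nle_sum_iff: "finite F \<Longrightarrow> nle (sum (g::_ \<Rightarrow> 'a) F) t \<longleftrightarrow> (\<forall>i\<in>F. nle (g i) t)"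
  by (induction F rule: finite_induct) (auto simp: nle_add_iff)

lemma nle_sum_list_iff: "nle (sum_list (xs::'a list)) t \<longleftrightarrow> (\<forall>x\<in>set xs. nle x t)"
  by (induction xs) (auto simp: nle_add_iff)

lemma lub_unique: "is_nlub (s::'a) A \<Longrightarrow> is_nlub s' A \<Longrightarrow> s = s'"
  unfolding is_nlub_def by (meson nle_antisym)

text \<open>csum is defined through partial sums; idempotence makes it the supremum of the terms.\<close>
lemma csum_lub: "is_nlub (csum (f::nat \<Rightarrow> 'a)) (range f)"
proof -
  let ?partial = "\<lambda>n. sum f {..n}"
  obtain s where s: "is_nlub s (range ?partial)"
    using chain_has_lub[of ?partial] by fastforce
  have "csum f = s"
    unfolding csum_def using s lub_unique by blast
  moreover have "is_nlub s (range f)"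
    unfolding is_nlub_def
  proof (intro conjI ballI allI impI)
    fix y assume "y \<in> range f"
    then obtain i where "y = f i" by blast
    have "nle (f i) (?partial i)" by (rule nle_sum_elem) auto
    also have "nle (?partial i) s" using s by (rule lub_ge) simp
    finally show "nle y s" using \<open>y = f i\<close> by simp
  next
    fix t assume "\<forall>y\<in>range f. nle y t"
    then show "nle s t" using s by (auto simp: nle_sum_iff intro: lub_le)
  qed
  ultimately show ?thesis by simp
qed

lemma csum_unique: "is_nlub s (range (f::nat \<Rightarrow> 'a)) \<Longrightarrow> csum f = s"
  using csum_lub lub_unique by blast

lemma csum_ge: "nle (f i) (csum (f::nat \<Rightarrow> 'a))"
  by (rule lub_ge[OF csum_lub]) simp

lemma csum_le: "(\<And>i. nle (f i) t) \<Longrightarrow> nle (csum (f::nat \<Rightarrow> 'a)) t"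
  by (rule lub_le[OF csum_lub]) auto

lemma csum_mono: "(\<And>i. nle (f i) (g i)) \<Longrightarrow> nle (csum (f::nat \<Rightarrow> 'a)) (csum g)"
  by (meson csum_ge csum_le nle_trans)

lemma lub_mult_range:
  "is_nlub s (range (f::nat \<Rightarrow> 'a)) \<Longrightarrow> is_nlub (c * s * d) (range (\<lambda>i. c * f i * d))"
  using csum_lub[of "\<lambda>i. c * f i * d"]
  by (simp add: csum_mult_left csum_mult_right csum_unique)

lemma lub_mult_image:
  assumes "countable A" "A \<noteq> {}" "is_nlub s (g ` A)"
  shows "is_nlub (c * s * d) ((\<lambda>x. c * g x * d) ` A :: 'a set)"
proof -
  have A: "range (from_nat_into A) = A"
    using assms(1,2) by (simp add: range_from_nat_into)
  have "is_nlub s (range (\<lambda>i. g (from_nat_into A i)))"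
    using assms(3) A image_image[of g "from_nat_into A" UNIV] by simp
  from lub_mult_range[OF this, of c d] show ?thesis
    using A image_image[of "\<lambda>x. c * g x * d" "from_nat_into A" UNIV] by simp
qed

lemma ssum_lub:
  assumes "countable A" "A \<noteq> {}"
  shows "is_nlub (ssum (g::_ \<Rightarrow> 'a) A) (g ` A)"
proof -
  have A: "range (from_nat_into A) = A"
    using assms by (simp add: range_from_nat_into)
  define s where "s = csum (\<lambda>i. g (from_nat_into A i))"
  have s: "is_nlub s (g ` A)"
    using csum_lub A image_image[of g "from_nat_into A" UNIV] unfolding s_def by metis
  have "is_nlub s {sum g F | F. finite F \<and> F \<subseteq> A}"
    unfolding is_nlub_def
  proof (intro conjI ballI allI impI)
    fix y assume "y \<in> {sum g F | F. finite F \<and> F \<subseteq> A}"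
    then obtain F where "y = sum g F" "finite F" "F \<subseteq> A" by blast
    then show "nle y s" using lub_ge[OF s] by (auto simp: nle_sum_iff)
  next
    fix t assume t: "\<forall>y\<in>{sum g F | F. finite F \<and> F \<subseteq> A}. nle y t"
    have "nle (g x) t" if "x \<in> A" for x
    proof -
      have "sum g {x} \<in> {sum g F | F. finite F \<and> F \<subseteq> A}" using that by blast
      then show ?thesis using t by simp
    qed
    then show "nle s t" using s by (auto intro: lub_le)
  qed
  then have "ssum g A = s"
    unfolding ssum_def using lub_unique by blast
  then show ?thesis using s by simp
qed

lemma lub_add:
  assumes s: "is_nlub s (range (f::nat \<Rightarrow> 'a))" and r: "is_nlub r (range g)"
  shows "is_nlub (s + r) (range (\<lambda>i. f i + g i))"
  unfolding is_nlub_def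
proof (intro conjI ballI allI impI)
  fix y assume "y \<in> range (\<lambda>i. f i + g i)"
  then obtain i where "y = f i + g i" by blast
  then show "nle y (s + r)"
    using lub_ge[OF s] lub_ge[OF r] by (simp add: nle_add_mono)
next
  fix t assume "\<forall>y\<in>range (\<lambda>i. f i + g i). nle y t"
  then have "nle (f i) t" "nle (g i) t" for i
    by (auto simp: nle_add_iff)
  then have "nle s t" "nle r t"
    by (auto intro: lub_le[OF s] lub_le[OF r])
  then show "nle (s + r) t" by (simp add: nle_add_iff)
qed

lemma lub_mult_chain:
  assumes f: "\<And>i. nle (f i) (f (Suc i))" and g: "\<And>i. nle (g i) (g (Suc i))"
    and s: "is_nlub s (range (f::nat \<Rightarrow> 'a))" and r: "is_nlub r (range g)"
  shows "is_nlub (s * r) (range (\<lambda>i. f i * g i))"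
  unfolding is_nlub_def
proof (intro conjI ballI allI impI)
  fix y assume "y \<in> range (\<lambda>i. f i * g i)"
  then obtain i where "y = f i * g i" by blast
  then show "nle y (s * r)"
    using lub_ge[OF s] lub_ge[OF r] by (simp add: nle_mult_mono)
next
  fix t assume t: "\<forall>y\<in>range (\<lambda>i. f i * g i). nle y t"
  have f_mono: "nle (f i) (f j)" and g_mono: "nle (g i) (g j)" if "i \<le> j" for i j
    using that by (induction rule: dec_induct) (auto intro: nle_trans f g)
  have "nle (f i * g j) t" for i j
  proof -
    have "nle (f i * g j) (f (max i j) * g (max i j))"
      by (intro nle_mult_mono f_mono g_mono) simp_all
    then show ?thesis using t nle_trans by blast
  qed
  then have "nle (s * g j) t" for j
    using lub_mult_range[OF s, of 1 "g j"] by (auto intro: lub_le)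
  then show "nle (s * r) t"
    using lub_mult_range[OF r, of s 1] by (auto intro: lub_le)
qed

end

section \<open>Polynomials and their differentials\<close>

lemma meval_Nil [simp]: "meval v [] = 1"
  by (simp add: meval_def)

lemma meval_Cons [simp]: "meval v (l # w) = leval v l * meval v w"
  by (simp add: meval_def)

lemma meval_append: "meval v (xs @ ys) = meval v xs * meval v ys"
  by (induction xs) (simp_all add: mult.assoc)

lemma peval_Nil [simp]: "peval v [] = 0"
  by (simp add: peval_def)

lemma peval_Cons [simp]: "peval v (m # h) = meval v m + peval v h"
  by (simp add: peval_def)

lemma peval_append: "peval v (xs @ ys) = peval v xs + peval v ys"
  by (induction xs) (simp_all add: add.assoc)

lemma peval_sys: "peval v (sys f a x) = peval v (f x) + a x"
  by (simp add: sys_def peval_append)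

lemma leval_mono: "vle v w \<Longrightarrow> nle (leval v l) (leval w l :: 'a::monoid_add)"
  by (cases l) (auto simp: vle_def)

lemma meval_mono: "vle v w \<Longrightarrow> nle (meval v m) (meval w m :: 'a::{semiring_0,monoid_mult})"
  by (induction m) (auto intro: nle_mult_mono leval_mono)

lemma peval_mono: "vle v w \<Longrightarrow> nle (peval v h) (peval w h :: 'a::{semiring_0,monoid_mult})"
  by (induction h) (auto intro: nle_add_mono meval_mono)

lemma peval_zero:
  "\<forall>m\<in>set h. \<exists>z. V z \<in> set m \<Longrightarrow> peval (\<lambda>_. 0) h = (0::'a::{semiring_0,monoid_mult})"
proof (induction h)
  case (Cons m h)
  have "meval (\<lambda>_. 0) m = (0::'a)" if "V z \<in> set m" for z
    using that by (induction m) auto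
  then show ?case using Cons by auto
qed simp

definition meval_replace :: "('x \<Rightarrow> 'a::monoid_mult) \<Rightarrow> ('a,'x) mono \<Rightarrow> nat \<Rightarrow> 'a \<Rightarrow> 'a" where
  "meval_replace v m j c = meval v (take j m) * c * meval v (drop (Suc j) m)"

lemma meval_replace_mono:
  "nle c d \<Longrightarrow> nle (meval_replace v m j c) (meval_replace v m j d :: 'a::{semiring_0,monoid_mult})"
  unfolding meval_replace_def by (intro nle_mult_mono) simp_all

lemma peval_subst_instance:
  "peval v (take k h @ map (\<lambda>gm. take j (h ! k) @ gm @ drop (Suc j) (h ! k)) s @ drop (Suc k) h)
   = peval v (take k h) + meval_replace v (h ! k) j (peval v s) + peval v (drop (Suc k) h)"
proof -
  have "peval v (map (\<lambda>gm. A @ gm @ B) s) = meval v A * peval v s * meval v B" for A B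
    by (induction s) (simp_all add: meval_append distrib_left distrib_right mult.assoc)
  then show ?thesis by (simp add: meval_replace_def peval_append add.assoc)
qed

lemma dmono_eq_sum_positions:
  "dmono y v m u =
   (\<Sum>j\<leftarrow>[0..<length m]. if m ! j = V y then meval_replace v m j (u y) else 0)"
proof (induction m)
  case (Cons l w)
  let ?term = "\<lambda>m j. if m ! j = V y then meval_replace v m j (u y) else 0"
  have positions: "[0..<length (l # w)] = 0 # map Suc [0..<length w]"
    by (simp only: length_Cons upt_conv_Cons[OF zero_less_Suc] map_Suc_upt)
  have "dletter y l u * meval v w = ?term (l # w) 0"
    by (cases l) (auto simp: meval_replace_def)
  moreover have "leval v l * dmono y v w u = (\<Sum>j\<leftarrow>[0..<length w]. ?term (l # w) (Suc j))"
    unfolding Cons.IH sum_list_const_mult[symmetric]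
    by (intro arg_cong[where f = sum_list] map_cong) (simp_all add: meval_replace_def mult.assoc)
  ultimately show ?case
    by (simp only: dmono.simps positions list.map sum_list.Cons map_map comp_def)
qed simp

context idem_omega
begin

lemma lub_meval:
  assumes chain: "\<And>k. vle (c k) (c (Suc k))" and lim: "\<And>x. is_nlub (w x) (range (\<lambda>k. c k x))"
  shows "is_nlub (meval w m) (range (\<lambda>k. meval (c k) m :: 'a))"
proof (induction m)
  case Nil
  show ?case by (simp add: is_nlub_def)
next
  case (Cons l m)
  have head: "is_nlub (leval w l) (range (\<lambda>k. leval (c k) l))"
    using lim by (cases l) (simp_all add: is_nlub_def)
  show ?case
    unfolding meval_Cons
    by (rule lub_mult_chain[OF _ _ head Cons]) (simp_all add: chain leval_mono meval_mono)
qed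

lemma lub_peval:
  assumes "\<And>k. vle (c k) (c (Suc k))" and "\<And>x. is_nlub (w x) (range (\<lambda>k. c k x))"
  shows "is_nlub (peval w h) (range (\<lambda>k. peval (c k) h :: 'a))"
proof (induction h)
  case Nil
  show ?case by (simp add: is_nlub_def)
next
  case (Cons m h)
  then show ?case
    unfolding peval_Cons by (rule lub_add[OF lub_meval[OF assms]])
qed

end

lemma Dp_sys [simp]: "Dp (sys f a) = Dp f"
  by (simp add: fun_eq_iff Dp_def dpoly_def sys_def)

lemma Dpow_sys [simp]: "Dpow (sys f a) v i = Dpow f v i"
  by (induction i) simp_all

lemma Dstar_sys [simp]: "Dstar (sys f a) = Dstar f"
  by (simp add: fun_eq_iff Dstar_def)

lemma Dpow_Suc_apply [simp]: "Dpow p v (Suc i) x u = Dp p v x (\<lambda>y. Dpow p v i y u)"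
  by (simp add: vcomp_def)

declare Dpow.simps(2) [simp del]

lemma meval_replace_var:
  "j < length m \<Longrightarrow> m ! j = V y \<Longrightarrow> meval_replace v m j (v y) = meval v m"
  by (metis id_take_nth_drop leval.simps(2) meval_Cons meval_append meval_replace_def mult.assoc)

lemma Dp_mono:
  assumes "vle v v'" "vle u u'"
  shows "nle (Dp p v x u) (Dp p v' x u' :: 'a::{semiring_0,monoid_mult})"
proof -
  have "nle (dletter y l u) (dletter y l u')" for y l
    using assms(2) by (cases l) (auto simp: vle_def)
  then have "nle (dmono y v m u) (dmono y v' m u')" for y m
    by (induction m) (auto intro!: nle_add_mono nle_mult_mono meval_mono leval_mono assms(1))
  then show ?thesis
    unfolding Dp_def dpoly_def by (intro nle_sum_mono nle_sum_list_map_mono)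
qed

lemma Dpow_mono:
  "vle v v' \<Longrightarrow> vle u u' \<Longrightarrow> nle (Dpow p v i x u) (Dpow p v' i x u' :: 'a::{semiring_0,monoid_mult})"
proof (induction i arbitrary: x)
  case (Suc i)
  then show ?case
    unfolding Dpow_Suc_apply by (intro Dp_mono) (simp_all add: vle_def)
qed (simp add: vle_def)

lemma meval_replace_le_Dp:
  assumes "k < length (p x)" "j < length (p x ! k)" "p x ! k ! j = V y"
  shows "nle (meval_replace v (p x ! k) j (u y)) (Dp p v x u :: 'a::{semiring_0,monoid_mult})"
proof -
  have "nle (meval_replace v (p x ! k) j (u y)) (dmono y v (p x ! k) u)"
  proof -
    have "j \<in> set [0..<length (p x ! k)]" using assms(2) by simp
    from nle_sum_list_map_elem[OF this,
        of "\<lambda>j. if p x ! k ! j = V y then meval_replace v (p x ! k) j (u y) else 0"]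
    show ?thesis unfolding dmono_eq_sum_positions using assms(3) by simp
  qed
  also have "nle \<dots> (dpoly y v (p x) u)"
    unfolding dpoly_def using nth_mem[OF assms(1)] by (rule nle_sum_list_map_elem)
  also have "nle \<dots> (Dp p v x u)"
    unfolding Dp_def by (rule nle_sum_elem) simp_all
  finally show ?thesis .
qed

context idem_omega
begin

lemma Dp_le:
  assumes "\<And>k j y. k < length (p x) \<Longrightarrow> j < length (p x ! k) \<Longrightarrow> p x ! k ! j = V y \<Longrightarrow>
      nle (meval_replace v (p x ! k) j (u y)) t"
  shows "nle (Dp p v x u) (t::'a)"
  unfolding Dp_def dpoly_def dmono_eq_sum_positions
  using assms by (auto simp: nle_sum_iff nle_sum_list_iff in_set_conv_nth)

lemma Dp_self_le: "nle (Dp p v x v) (peval v (p x) :: 'a)"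
proof (rule Dp_le)
  fix k j y
  assume "k < length (p x)" "j < length (p x ! k)" "p x ! k ! j = V y"
  then show "nle (meval_replace v (p x ! k) j (v y)) (peval v (p x))"
    unfolding peval_def by (simp add: meval_replace_var nle_sum_list_map_elem)
qed

text \<open>Euler's identity: Dp|_v(v) contains a copy of each monomial per occurrence of a variable,
  and idempotence merges the copies.\<close>
lemma Dp_self:
  assumes "\<forall>m\<in>set (p x). \<exists>z. V z \<in> set m"
  shows "Dp p v x v = (peval v (p x) :: 'a)"
proof (rule nle_antisym[OF Dp_self_le])
  have "nle (meval v (p x ! k)) (Dp p v x v)" if k: "k < length (p x)" for k
  proof -
    obtain j y where j: "j < length (p x ! k)" "p x ! k ! j = V y"
      using assms k by (metis in_set_conv_nth nth_mem)
    then show ?thesis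
      using meval_replace_le_Dp[of k p x j y v v, OF k j] by (simp add: meval_replace_var)
  qed
  then show "nle (peval v (p x)) (Dp p v x v)"
    unfolding peval_def by (auto simp: nle_sum_list_iff in_set_conv_nth)
qed

lemma Dstar_lub: "is_nlub (Dstar p v x u) (range (\<lambda>i. Dpow p v i x u :: 'a))"
  unfolding Dstar_def by (rule csum_lub)

lemma Dstar_ge: "nle (Dpow p v i x u) (Dstar p v x u :: 'a)"
  unfolding Dstar_def by (rule csum_ge)

lemma Dstar_mono: "vle v v' \<Longrightarrow> vle u u' \<Longrightarrow> nle (Dstar p v x u) (Dstar p v' x u' :: 'a)"
  unfolding Dstar_def by (intro csum_mono Dpow_mono)

end

section \<open>Linear completion\<close>

lemma lps_letters:
  "lps f x g \<Longrightarrow> g \<in> lists (lists (range V \<union> (\<Union>y. \<Union>m\<in>set (f y). set m)))"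
proof (induction rule: lps.induct)
  case (lps_step y s g x)
  let ?L = "range V \<union> (\<Union>y. \<Union>m\<in>set (f y). set m)"
  obtain k j where k: "k < length (f x)"
    and g: "g = take k (f x) @ map (\<lambda>gm. take j (f x ! k) @ gm @ drop (Suc j) (f x ! k)) s
               @ drop (Suc k) (f x)"
    using lps_step.hyps(2) unfolding subst_def by blast
  have fx: "set m \<subseteq> ?L" if "m \<in> set (f x)" for m
    using that by blast
  have "set m \<subseteq> ?L" if "m \<in> set g" for m
  proof -
    from that consider "m \<in> set (take k (f x))" | "m \<in> set (drop (Suc k) (f x))"
      | gm where "gm \<in> set s" "m = take j (f x ! k) @ gm @ drop (Suc j) (f x ! k)"
      unfolding g by auto
    then show ?thesis
    proof cases
      case 3
      have "set (f x ! k) \<subseteq> ?L" using fx k by simp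
      then show ?thesis
        using 3 lps_step.IH by (auto dest: in_set_takeD in_set_dropD)
    qed (auto dest: in_set_takeD in_set_dropD fx)
  qed
  then show ?case by (auto simp: lists_eq_set)
qed auto

lemma countable_lps: "countable {g. lps (f::'x::finite \<Rightarrow> ('a,'x) poly) x g}"
proof (rule countable_subset)
  show "{g. lps f x g} \<subseteq> lists (lists (range V \<union> (\<Union>y. \<Union>m\<in>set (f y). set m)))"
    using lps_letters by (intro subsetI) (simp only: mem_Collect_eq)
  show "countable (lists (lists (range V \<union> (\<Union>y. \<Union>m\<in>set (f y). set m))))"
  proof (intro countable_lists countable_finite finite_UnI)
    show "finite (range (V :: 'x \<Rightarrow> ('a,'x) letter))" by simp
    show "finite (\<Union>y. \<Union>m\<in>set (f y). set m)" by simp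
  qed
qed

context idem_omega
begin

lemma linc_lub:
  "is_nlub (linc (f::'x::finite \<Rightarrow> ('a,'x) poly) x b) (peval b ` {g. lps f x g})"
  unfolding linc_def by (rule ssum_lub[OF countable_lps]) (auto intro: lps_id)

lemma lps_le_Dstar:
  assumes no_const: "\<forall>x. \<forall>m\<in>set (f x). \<exists>z. V z \<in> set m"
  shows "lps f x g \<Longrightarrow> nle (peval b g) (Dstar f b x b :: 'a)"
proof (induction rule: lps.induct)
  case (lps_id x)
  show ?case using Dstar_ge[of f b 0 x b] by simp
next
  case (lps_step y s g x)
  then obtain k j where kj: "k < length (f x)" "j < length (f x ! k)" "f x ! k ! j = V y"
    and g: "g = take k (f x) @ map (\<lambda>gm. take j (f x ! k) @ gm @ drop (Suc j) (f x ! k)) s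
               @ drop (Suc k) (f x)"
    unfolding subst_def by blast
  have "peval b (f x) = peval b (take k (f x)) + (meval b (f x ! k) + peval b (drop (Suc k) (f x)))"
    by (subst id_take_nth_drop[OF kj(1)]) (simp add: peval_append)
  then have "nle (peval b (take k (f x)) + peval b (drop (Suc k) (f x))) (peval b (f x))"
    by (simp add: nle_add_mono)
  also have "\<dots> = Dpow f b (Suc 0) x b"
    using no_const by (simp add: Dp_self)
  also have "nle \<dots> (Dstar f b x b)"
    by (rule Dstar_ge)
  finally have rest: "nle (peval b (take k (f x)) + peval b (drop (Suc k) (f x))) (Dstar f b x b)" .
  have "nle (meval_replace b (f x ! k) j (peval b s)) (meval_replace b (f x ! k) j (Dstar f b y b))"
    using lps_step.IH by (rule meval_replace_mono)
  also have "nle \<dots> (Dstar f b x b)"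
  proof (rule lub_le)
    show "is_nlub (meval_replace b (f x ! k) j (Dstar f b y b))
        (range (\<lambda>i. meval_replace b (f x ! k) j (Dpow f b i y b)))"
      unfolding meval_replace_def by (rule lub_mult_image[OF _ _ Dstar_lub]) simp_all
  next
    fix d assume "d \<in> range (\<lambda>i. meval_replace b (f x ! k) j (Dpow f b i y b))"
    then obtain i where "d = meval_replace b (f x ! k) j (Dpow f b i y b)"
      by blast
    also have "nle \<dots> (Dp f b x (\<lambda>y. Dpow f b i y b))"
      using kj by (rule meval_replace_le_Dp)
    also have "\<dots> = Dpow f b (Suc i) x b"
      by (simp add: Dpow_Suc_apply)
    also have "nle \<dots> (Dstar f b x b)"
      by (rule Dstar_ge)
    finally show "nle d (Dstar f b x b)" .
  qed
  finally show ?case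
    using rest unfolding g peval_subst_instance by (simp add: nle_add_iff)
qed

lemma Dp_linc_le: "nle (Dp f b x (\<lambda>y. linc f y b)) (linc (f::'x::finite \<Rightarrow> ('a,'x) poly) x b)"
proof (rule Dp_le)
  fix k j y
  assume kj: "k < length (f x)" "j < length (f x ! k)" "f x ! k ! j = V y"
  show "nle (meval_replace b (f x ! k) j (linc f y b)) (linc f x b)"
  proof (rule lub_le)
    show "is_nlub (meval_replace b (f x ! k) j (linc f y b))
        ((\<lambda>g. meval_replace b (f x ! k) j (peval b g)) ` {g. lps f y g})"
      unfolding meval_replace_def
      by (rule lub_mult_image[OF countable_lps _ linc_lub]) (auto intro: lps_id)
  next
    fix d assume "d \<in> (\<lambda>g. meval_replace b (f x ! k) j (peval b g)) ` {g. lps f y g}"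
    then obtain s where s: "lps f y s" and d: "d = meval_replace b (f x ! k) j (peval b s)"
      by blast
    let ?g = "take k (f x) @ map (\<lambda>gm. take j (f x ! k) @ gm @ drop (Suc j) (f x ! k)) s
               @ drop (Suc k) (f x)"
    have "lps f x ?g"
      using s by (rule lps_step) (use kj in \<open>auto simp: subst_def\<close>)
    then have "nle (peval b ?g) (linc f x b)"
      by (intro lub_ge[OF linc_lub]) simp
    moreover have "nle d (peval b ?g)"
      unfolding d peval_subst_instance by (rule nle_trans[OF nle_add2 nle_add1])
    ultimately show "nle d (linc f x b)"
      by (rule nle_trans[rotated])
  qed
qed

lemma Dpow_le_linc: "nle (Dpow f b i x b) (linc (f::'x::finite \<Rightarrow> ('a,'x) poly) x b)"
proof (induction i arbitrary: x)
  case 0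
  have "peval b [[V x]] \<in> peval b ` {g. lps f x g}"
    by (rule imageI) (simp add: lps_id)
  from lub_ge[OF linc_lub this] show ?case
    by simp
next
  case (Suc i)
  have "nle (Dp f b x (\<lambda>y. Dpow f b i y b)) (Dp f b x (\<lambda>y. linc f y b))"
    using Suc.IH by (intro Dp_mono) (simp_all add: vle_def)
  also have "nle \<dots> (linc f x b)"
    by (rule Dp_linc_le)
  finally show ?case by simp
qed

text \<open>Every linear polynomial substitution threads one path through the iterated differentials,
  and conversely.\<close>
lemma linc_eq_Dstar:
  assumes "\<forall>x. \<forall>m\<in>set (f x). \<exists>z. V z \<in> set m"
  shows "linc (f::'x::finite \<Rightarrow> ('a,'x) poly) x b = Dstar f b x b"
proof (rule nle_antisym)
  show "nle (linc f x b) (Dstar f b x b)"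
    by (rule lub_le[OF linc_lub]) (auto intro: lps_le_Dstar[OF assms])
  show "nle (Dstar f b x b) (linc f x b)"
    unfolding Dstar_def by (rule csum_le) (rule Dpow_le_linc)
qed

end

section \<open>Newton iteration\<close>

definition peval_vec :: "('x \<Rightarrow> ('a::{semiring_0,monoid_mult},'x) poly) \<Rightarrow> ('x \<Rightarrow> 'a) \<Rightarrow> 'x \<Rightarrow> 'a" where
  "peval_vec p v = (\<lambda>x. peval v (p x))"

definition newton_step :: "('x::finite \<Rightarrow> ('a::{semiring_0,monoid_mult},'x) poly) \<Rightarrow> ('x \<Rightarrow> 'a) \<Rightarrow> 'x \<Rightarrow> 'a" where
  "newton_step p v = (\<lambda>x. Dstar p v x v)"

lemma peval_vec_mono: "vle v w \<Longrightarrow> vle (peval_vec p v) (peval_vec p w)"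
  using peval_mono by (auto simp: vle_def peval_vec_def)

lemma kleene_chain: "vle ((peval_vec p ^^ k) (\<lambda>_. 0)) (peval_vec p ((peval_vec p ^^ k) (\<lambda>_. 0)))"
proof (induction k)
  case 0
  show ?case by (simp add: vle_def)
next
  case (Suc k)
  then show ?case by (simp add: peval_vec_mono)
qed

lemma newton_eq_iterate:
  assumes "\<forall>x. \<forall>m\<in>set (f x). \<exists>z. V z \<in> set m"
  shows "newton (sys f a) k = (newton_step f ^^ k) a"
proof (induction k)
  case 0
  show ?case using assms by (simp add: fun_eq_iff peval_sys peval_zero)
next
  case (Suc k)
  then show ?case by (simp add: newton_step_def)
qed

context idem_omega
begin

lemma kleene_limit_is_solution:
  "is_solution p (\<lambda>x. csum (\<lambda>k. (peval_vec p ^^ k) (\<lambda>_. 0::'a) x))"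
  unfolding is_solution_def
proof
  fix x
  let ?K = "\<lambda>k. (peval_vec p ^^ k) (\<lambda>_. 0::'a)"
  let ?lim = "\<lambda>x. csum (\<lambda>k. ?K k x)"
  have chain: "vle (?K k) (?K (Suc k))" for k
    using kleene_chain by simp
  have "is_nlub (?lim y) (range (\<lambda>k. ?K k y))" for y
    by (rule csum_lub)
  from lub_peval[OF chain this]
  have "is_nlub (peval ?lim (p x)) (range (\<lambda>k. peval (?K k) (p x)))" .
  then have shifted: "is_nlub (peval ?lim (p x)) (range (\<lambda>k. ?K (Suc k) x))"
    by (simp add: peval_vec_def)
  have "nle (?K k x) (?K (Suc k) x)" for k
    using chain unfolding vle_def by blast
  from lub_shift[OF this shifted]
  have "is_nlub (peval ?lim (p x)) (range (\<lambda>k. ?K k x))" .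
  then show "?lim x = peval ?lim (p x)"
    by (rule csum_unique)
qed

lemma newton_step_mono: "vle v w \<Longrightarrow> vle (newton_step p v) (newton_step p w :: _ \<Rightarrow> 'a)"
  unfolding newton_step_def by (subst vle_def) (simp add: Dstar_mono)

lemma newton_step_inflationary: "vle v (newton_step p v :: _ \<Rightarrow> 'a)"
  unfolding newton_step_def vle_def using Dstar_ge[of p v 0] by simp

lemma newton_iterate_mono:
  "m \<le> n \<Longrightarrow> vle ((newton_step p ^^ m) v) ((newton_step p ^^ n) v :: _ \<Rightarrow> 'a)"
proof (induction rule: dec_induct)
  case (step n)
  then show ?case using newton_step_inflationary vle_trans by fastforce
qed simp

lemma newton_step_le_solution:
  assumes "is_solution (sys f a) mu"
  shows "vle (newton_step f mu) (mu :: _ \<Rightarrow> 'a)"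
proof -
  have "nle (Dpow f mu i x mu) (mu x)" for i x
  proof (induction i arbitrary: x)
    case (Suc i)
    have "nle (Dp f mu x (\<lambda>y. Dpow f mu i y mu)) (Dp f mu x mu)"
      using Suc.IH by (intro Dp_mono) (simp_all add: vle_def)
    also have "nle \<dots> (peval mu (f x))"
      by (rule Dp_self_le)
    also have "nle \<dots> (mu x)"
      using assms unfolding is_solution_def by (metis nle_add1 peval_sys)
    finally show ?case by simp
  qed simp
  then show ?thesis
    unfolding newton_step_def vle_def Dstar_def by (auto intro: csum_le)
qed

lemma peval_vec_sys_le_newton_step:
  assumes "\<forall>x. \<forall>m\<in>set (f x). \<exists>z. V z \<in> set m" and "vle a v"
  shows "vle (peval_vec (sys f a) v) (newton_step f v :: _ \<Rightarrow> 'a)"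
  unfolding vle_def
proof
  fix x
  have "peval v (f x) = Dpow f v (Suc 0) x v"
    using assms(1) by (simp add: Dp_self)
  also have "nle \<dots> (newton_step f v x)"
    unfolding newton_step_def by (rule Dstar_ge)
  finally have "nle (peval v (f x)) (newton_step f v x)" .
  moreover have "nle (a x) (newton_step f v x)"
    using vle_trans[OF assms(2) newton_step_inflationary] by (simp add: vle_def)
  ultimately show "nle (peval_vec (sys f a) v x) (newton_step f v x)"
    by (simp add: peval_vec_def peval_sys nle_add_iff)
qed

lemma Mseq_eq_newton_iterate:
  assumes "\<forall>x. \<forall>m\<in>set (f x). \<exists>z. V z \<in> set m"
  shows "(\<lambda>x. Mseq f n x v) = (newton_step f ^^ 2 ^ n) (v :: _ \<Rightarrow> 'a)"
proof (induction n arbitrary: v)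
  case 0
  show ?case using assms by (simp add: fun_eq_iff linc_eq_Dstar newton_step_def)
next
  case (Suc n)
  have "(\<lambda>x. Mseq f (Suc n) x v) = (\<lambda>x. Mseq f n x (\<lambda>y. Mseq f n y v))"
    by (simp add: vcomp_def)
  also have "\<dots> = (newton_step f ^^ 2 ^ n) ((newton_step f ^^ 2 ^ n) v)"
    using Suc.IH by simp
  also have "\<dots> = (newton_step f ^^ 2 ^ Suc n) v"
    by (simp add: funpow_add mult_2)
  finally show ?case .
qed

lemma kleene_le_newton_iterate:
  assumes "\<forall>x. \<forall>m\<in>set (f x). \<exists>z. V z \<in> set m" and "vle a b"
  shows "vle ((peval_vec (sys f a) ^^ k) (\<lambda>_. 0)) ((newton_step f ^^ k) b :: _ \<Rightarrow> 'a)"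
proof (induction k)
  case (Suc k)
  have "vle a ((newton_step f ^^ k) b)"
    using assms(2) newton_iterate_mono[of 0 k] vle_trans by fastforce
  then have "vle (peval_vec (sys f a) ((newton_step f ^^ k) b)) ((newton_step f ^^ Suc k) b)"
    using assms(1) by (simp add: peval_vec_sys_le_newton_step)
  with Suc.IH show ?case
    using peval_vec_mono vle_trans by fastforce
qed (simp add: vle_def)

lemma newton_iterate_le_solution:
  "is_solution (sys f a) mu \<Longrightarrow> vle b mu \<Longrightarrow> vle ((newton_step f ^^ k) b) (mu :: _ \<Rightarrow> 'a)"
proof (induction k)
  case (Suc k)
  then show ?case
    using newton_step_mono newton_step_le_solution vle_trans by fastforce
qed simp

text \<open>The Kleene iterates lie below the Newton iterates and converge to a solution, which
  therefore bounds the least solution from above.\<close>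
lemma newton_iterates_lub:
  assumes no_const: "\<forall>x. \<forall>m\<in>set (f x). \<exists>z. V z \<in> set m"
    and least: "least_solution (sys f a) mu" and "vle a b" "vle b mu"
  shows "vis_lub mu (range (\<lambda>n. (newton_step f ^^ 2 ^ n) b) :: (_ \<Rightarrow> 'a) set)"
  unfolding vis_lub_def
proof (intro conjI ballI allI impI)
  fix u assume "u \<in> range (\<lambda>n. (newton_step f ^^ 2 ^ n) b)"
  then show "vle u mu"
    using least \<open>vle b mu\<close> by (auto simp: least_solution_def intro: newton_iterate_le_solution)
next
  fix t assume t: "\<forall>u\<in>range (\<lambda>n. (newton_step f ^^ 2 ^ n) b). vle u t"
  let ?K = "\<lambda>k. (peval_vec (sys f a) ^^ k) (\<lambda>_. 0::'a)"
  have "vle (?K k) t" for k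
  proof -
    have "vle (?K k) ((newton_step f ^^ k) b)"
      using no_const \<open>vle a b\<close> by (rule kleene_le_newton_iterate)
    also have "vle \<dots> ((newton_step f ^^ 2 ^ k) b)"
      by (rule newton_iterate_mono) (simp add: less_imp_le)
    also have "vle \<dots> t"
      using t by simp
    finally show ?thesis .
  qed
  then have "vle (\<lambda>x. csum (\<lambda>k. ?K k x)) t"
    unfolding vle_def by (auto intro: csum_le)
  moreover have "vle mu (\<lambda>x. csum (\<lambda>k. ?K k x))"
    using least kleene_limit_is_solution unfolding least_solution_def by blast
  ultimately show "vle mu t"
    by (rule vle_trans[rotated])
qed

end

theorem theorem9:
  fixes f :: "'x::finite \<Rightarrow> ('a::{semiring_0,monoid_mult}, 'x) poly"
    and a :: "'x \<Rightarrow> 'a"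
  assumes S: "idem_omega_semiring TYPE('a)"
    and "\<forall>x. \<forall>m \<in> set (f x). \<exists>z. V z \<in> set m"
  shows "(\<forall>n. (\<lambda>x. Mseq f n x a) = newton (sys f a) (2 ^ n))
       \<and> (\<forall>mu b. least_solution (sys f a) mu \<and> vle a b \<and> vle b mu
              \<longrightarrow> vis_lub mu (range (\<lambda>n. \<lambda>x. Mseq f n x b)))"
proof -
  interpret idem_omega "TYPE('a)"
    using S by unfold_locales
  have "(\<lambda>x. Mseq f n x b) = (newton_step f ^^ 2 ^ n) b" for n b
    using assms(2) by (rule Mseq_eq_newton_iterate)
  moreover have "newton (sys f a) k = (newton_step f ^^ k) a" for k
    using assms(2) by (rule newton_eq_iterate)
  ultimately show ?thesis
    using newton_iterates_lub[OF assms(2)] by auto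
qed

end
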